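(* Let $d\geq 2$, $\varepsilon=\cos(2\pi/d)+i\sin(2\pi/d)$, and let $\mathbb{C}\langle Y_d\rangle=\mathbb{C}\langle y_0,\ldots,y_{d-1}\rangle$ be the free associative unital algebra, on which the cyclic group $C_d=\langle\rho\rangle$ acts by algebra automorphisms with $\rho(y_k)=\varepsilon^k y_k$, $k=0,\ldots,d-1$ (equivalently, $y_k=x_1+\varepsilon^{-k}x_2+\cdots+\varepsilon^{-k(d-1)}x_d$ and $\rho$ cyclically shifts $x_1\mapsto x_2\mapsto\cdots\mapsto x_d\mapsto x_1$). Let $U=\{u_0=y_0,u_1,\ldots,u_k\}$, where $u_1,\ldots,u_k$ are all commutative monomials $u=y_1^{n_1}\cdots y_{d-1}^{n_{d-1}}$ in $\mathbb{C}[y_0,\ldots,y_{d-1}]$ such that $1\leq n_1+\cdots+n_{d-1}\leq d$, $n_1+2n_2+\cdots+(d-1)n_{d-1}\equiv 0\pmod d$, and $u$ cannot be presented as a product of two or more monomials of this kind (so $U$ generates the commutative invariant algebra $\mathbb{C}[Y_d]^{C_d}$). Regard each $u_i=y_1^{n_{i,1}}\cdots y_{d-1}^{n_{i,d-1}}$ as the element of $\mathbb{C}\langle Y_d\rangle$ given by the same word. Then $U$ generates the $S$-algebra $(\mathbb{C}\langle Y_d\rangle^{C_d},\circ)$, i.e. the smallest subalgebra of $\mathbb{C}\langle Y_d\rangle$ containing $U$ and closed under the operations $\circ\sigma$ is $\mathbb{C}\langle Y_d\rangle^{C_d}$.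
   Context: The $S$-algebra structure $(\mathbb{C}\langle Y_d\rangle,\circ)$: on the homogeneous component of degree $n$ the symmetric group $\mathrm{Sym}_n$ acts on the right by permuting positions of variables, $(y_{j_1}\cdots y_{j_n})\circ\sigma=y_{j_{\sigma^{-1}(1)}}\cdots y_{j_{\sigma^{-1}(n)}}$, extended linearly. An $S$-subalgebra is a (unital) subalgebra that is a graded subspace whose homogeneous components of each degree $n$ are closed under $\circ\sigma$ for all $\sigma\in\mathrm{Sym}_n$; the $S$-subalgebra generated by a set of homogeneous elements is the smallest such subalgebra containing it. $\mathbb{C}\langle Y_d\rangle^{C_d}=\{f:\rho(f)=f\}$. *)

theory Defs
  imports Complex_Main "HOL-Combinatorics.Permutations"
begin

text \<open>Elements of the free associative unital algebra C<y_0,...,y_{d-1}> are represented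
  as finitely supported coefficient functions on words; a word is a list of letter
  indices (the letter j stands for y_j).\<close>

type_synonym ncpoly = "nat list \<Rightarrow> complex"

definition NC :: "nat \<Rightarrow> ncpoly set" where
  "NC d = {f. finite {w. f w \<noteq> 0} \<and> (\<forall>w. f w \<noteq> 0 \<longrightarrow> set w \<subseteq> {..<d})}"

definition nc_one :: ncpoly where
  "nc_one = (\<lambda>w. if w = [] then 1 else 0)"

definition nc_mono :: "nat list \<Rightarrow> ncpoly" where
  "nc_mono u = (\<lambda>w. if w = u then 1 else 0)"

definition nc_add :: "ncpoly \<Rightarrow> ncpoly \<Rightarrow> ncpoly" where
  "nc_add f g = (\<lambda>w. f w + g w)"

definition nc_smult :: "complex \<Rightarrow> ncpoly \<Rightarrow> ncpoly" where
  "nc_smult c f = (\<lambda>w. c * f w)"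

definition nc_mult :: "ncpoly \<Rightarrow> ncpoly \<Rightarrow> ncpoly" where
  "nc_mult f g = (\<lambda>w. \<Sum>i\<le>length w. f (take i w) * g (drop i w))"

definition homog :: "nat \<Rightarrow> ncpoly \<Rightarrow> ncpoly" where
  "homog n f = (\<lambda>w. if length w = n then f w else 0)"

text \<open>Positions are 0-based: (w o sigma) ! j = w ! (inv sigma j), for sigma permuting {..<n}.\<close>
definition permw :: "(nat \<Rightarrow> nat) \<Rightarrow> nat list \<Rightarrow> nat list" where
  "permw \<sigma> w = map (\<lambda>j. w ! inv \<sigma> j) [0..<length w]"

text \<open>Linear extension of the word action to a polynomial: the coefficient of v in
  f o sigma is the coefficient in f of the unique word w with w o sigma = v.\<close>
definition nc_act :: "ncpoly \<Rightarrow> (nat \<Rightarrow> nat) \<Rightarrow> ncpoly" where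
  "nc_act f \<sigma> = (\<lambda>v. f (permw (inv \<sigma>) v))"

definition S_subalgebra :: "nat \<Rightarrow> ncpoly set \<Rightarrow> bool" where
  "S_subalgebra d A \<longleftrightarrow>
     A \<subseteq> NC d \<and> nc_one \<in> A \<and>
     (\<forall>f\<in>A. \<forall>g\<in>A. nc_add f g \<in> A) \<and>
     (\<forall>c. \<forall>f\<in>A. nc_smult c f \<in> A) \<and>
     (\<forall>f\<in>A. \<forall>g\<in>A. nc_mult f g \<in> A) \<and>
     (\<forall>n. \<forall>f\<in>A. homog n f \<in> A) \<and>
     (\<forall>n \<sigma>. \<forall>f\<in>A. \<sigma> permutes {..<n} \<and> homog n f = f \<longrightarrow> nc_act f \<sigma> \<in> A)"

definition S_generated :: "nat \<Rightarrow> ncpoly set \<Rightarrow> ncpoly set" where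
  "S_generated d U = \<Inter> {A. S_subalgebra d A \<and> U \<subseteq> A}"

definition eps :: "nat \<Rightarrow> complex" where
  "eps d = Complex (cos (2 * pi / real d)) (sin (2 * pi / real d))"

text \<open>The algebra automorphism rho with rho(y_k) = eps^k y_k acts on a word w by the scalar
  eps^(sum of letter indices of w).\<close>
definition rho :: "nat \<Rightarrow> ncpoly \<Rightarrow> ncpoly" where
  "rho d f = (\<lambda>w. eps d ^ sum_list w * f w)"

definition invariants :: "nat \<Rightarrow> ncpoly set" where
  "invariants d = {f \<in> NC d. rho d f = f}"

text \<open>Exponent vectors (n_1,...,n_{d-1}) of the admissible commutative monomials.\<close>
definition admissible :: "nat \<Rightarrow> (nat \<Rightarrow> nat) \<Rightarrow> bool" where
  "admissible d ns \<longleftrightarrow>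
     (\<forall>j. (j = 0 \<or> d \<le> j) \<longrightarrow> ns j = 0) \<and>
     1 \<le> (\<Sum>j\<in>{1..<d}. ns j) \<and> (\<Sum>j\<in>{1..<d}. ns j) \<le> d \<and>
     (\<Sum>j\<in>{1..<d}. j * ns j) mod d = 0"

definition indecomposable :: "nat \<Rightarrow> (nat \<Rightarrow> nat) \<Rightarrow> bool" where
  "indecomposable d ns \<longleftrightarrow> admissible d ns \<and>
     \<not> (\<exists>a b. admissible d a \<and> admissible d b \<and> ns = (\<lambda>j. a j + b j))"

definition mono_word :: "nat \<Rightarrow> (nat \<Rightarrow> nat) \<Rightarrow> nat list" where
  "mono_word d ns = concat (map (\<lambda>j. replicate (ns j) j) [1..<d])"

definition U_gen :: "nat \<Rightarrow> ncpoly set" where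
  "U_gen d = insert (nc_mono [0]) {nc_mono (mono_word d ns) | ns. indecomposable d ns}"

end

theory Submission
  imports Defs
begin

text \<open>Since \<open>\<rho>\<close> multiplies a word \<open>w\<close> by \<open>\<epsilon>\<^sup>\<Sigma>\<^sup>w\<close>, the invariants are exactly the
  polynomials supported on words whose letter sum is divisible by \<open>d\<close>; these form an
  \<open>S\<close>-subalgebra containing \<open>U\<close>. Conversely, every such word is, up to a permutation
  of positions, a product of generators: split off a letter \<open>y\<^sub>0\<close> or a minimal zero-sum
  submultiset of the nonzero letters. By the pigeonhole principle on prefix sums, a minimal
  zero-sum multiset has at most \<open>d\<close> elements, so it is the exponent vector of an
  indecomposable admissible monomial.\<close>

lemma eps_pow_eq_1_iff:
  assumes "0 < d"
  shows "eps d ^ k = 1 \<longleftrightarrow> d dvd k"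
proof -
  have eps_pow: "eps d ^ j = cis (2 * pi * real j / real d)" for j
  proof -
    have "eps d = cis (2 * pi / real d)" by (simp add: eps_def complex_eq_iff)
    then show ?thesis by (simp add: DeMoivre mult_ac)
  qed
  have "eps d ^ d = 1" using assms by (simp add: eps_pow)
  then have "eps d ^ k = eps d ^ (k mod d)"
    by (metis div_mult_mod_eq mult.commute power_add power_mult power_one mult_1)
  moreover have "eps d ^ (k mod d) = eps d ^ 0 \<longleftrightarrow> k mod d = 0"
    using inj_onD[OF bij_betw_imp_inj_on[OF bij_betw_roots_unity[OF assms]], of "k mod d" 0] assms
    by (auto simp: eps_pow)
  ultimately show ?thesis by auto
qed

definition nc_support :: "ncpoly \<Rightarrow> nat list set" where
  "nc_support f = {w. f w \<noteq> 0}"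

lemma NC_iff_support:
  "f \<in> NC d \<longleftrightarrow> finite (nc_support f) \<and> (\<forall>w\<in>nc_support f. set w \<subseteq> {..<d})"
  by (auto simp: NC_def nc_support_def)

lemma invariants_eq_zero_sum_support:
  assumes "0 < d"
  shows "invariants d = {f \<in> NC d. nc_support f \<subseteq> {w. d dvd sum_list w}}"
  using assms by (auto simp: invariants_def rho_def nc_support_def fun_eq_iff eps_pow_eq_1_iff[symmetric])

lemma nc_support_nc_one: "nc_support nc_one = {[]}"
  by (auto simp: nc_support_def nc_one_def)

lemma nc_support_nc_mono: "nc_support (nc_mono u) = {u}"
  by (auto simp: nc_support_def nc_mono_def)

lemma nc_support_nc_add: "nc_support (nc_add f g) \<subseteq> nc_support f \<union> nc_support g"
  by (auto simp: nc_support_def nc_add_def)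

lemma nc_support_nc_smult: "nc_support (nc_smult c f) \<subseteq> nc_support f"
  by (auto simp: nc_support_def nc_smult_def)

lemma nc_support_homog: "nc_support (homog n f) \<subseteq> nc_support f"
  by (auto simp: nc_support_def homog_def)

lemma nc_support_nc_mult:
  "nc_support (nc_mult f g) \<subseteq> (\<lambda>(u, v). u @ v) ` (nc_support f \<times> nc_support g)"
proof
  fix w assume "w \<in> nc_support (nc_mult f g)"
  then have "(\<Sum>i\<le>length w. f (take i w) * g (drop i w)) \<noteq> 0"
    by (simp add: nc_support_def nc_mult_def)
  then obtain i where "f (take i w) * g (drop i w) \<noteq> 0"
    by (meson sum.not_neutral_contains_not_neutral)
  then show "w \<in> (\<lambda>(u, v). u @ v) ` (nc_support f \<times> nc_support g)"
    by (intro image_eqI[of _ _ "(take i w, drop i w)"]) (auto simp: nc_support_def)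
qed

lemma nc_act_eq:
  assumes "\<sigma> permutes {..<n}"
  shows "nc_act f \<sigma> = (\<lambda>v. f (permute_list \<sigma> v))"
  by (simp add: nc_act_def permw_def permute_list_def permutes_inv_inv[OF assms])

lemma permute_list_inv_eq_iff:
  assumes "\<sigma> permutes {..<length w}"
  shows "permute_list \<sigma> v = w \<longleftrightarrow> v = permute_list (inv \<sigma>) w"
proof
  assume w: "permute_list \<sigma> v = w"
  then have "length v = length w" by (metis length_permute_list)
  then have "inv \<sigma> permutes {..<length v}" using permutes_inv[OF assms] by simp
  then have "permute_list (inv \<sigma>) w = permute_list (\<sigma> \<circ> inv \<sigma>) v"
    using w permute_list_compose[of "inv \<sigma>" v \<sigma>] by simp
  then show "v = permute_list (inv \<sigma>) w"
    using permutes_inv_o(1)[of \<sigma>] assms by simp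
next
  assume "v = permute_list (inv \<sigma>) w"
  then show "permute_list \<sigma> v = w"
    using permute_list_compose[OF assms, of "inv \<sigma>"] permutes_inv_o(2)[OF assms] by simp
qed

lemma nc_act_nc_mono:
  assumes "\<sigma> permutes {..<length w}"
  shows "nc_act (nc_mono w) \<sigma> = nc_mono (permute_list (inv \<sigma>) w)"
  by (simp add: nc_act_eq[OF assms] nc_mono_def permute_list_inv_eq_iff[OF assms] fun_eq_iff)

lemma length_nc_support_homog:
  assumes "homog n f = f" and "w \<in> nc_support f"
  shows "length w = n"
proof -
  have "homog n f w \<noteq> 0" using assms by (simp add: nc_support_def)
  then show ?thesis by (simp add: homog_def split: if_splits)
qed

lemma nc_support_nc_act:
  assumes "\<sigma> permutes {..<n}" and "homog n f = f"
  shows "nc_support (nc_act f \<sigma>) \<subseteq> permute_list (inv \<sigma>) ` nc_support f"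
proof
  fix v assume "v \<in> nc_support (nc_act f \<sigma>)"
  then have supp: "permute_list \<sigma> v \<in> nc_support f"
    by (simp add: nc_support_def nc_act_eq[OF assms(1)])
  then have "length v = n"
    using length_nc_support_homog[OF assms(2) supp] by simp
  then have "v = permute_list (inv \<sigma>) (permute_list \<sigma> v)"
    using permute_list_inv_eq_iff[of \<sigma> "permute_list \<sigma> v" v] assms(1) by simp
  with supp show "v \<in> permute_list (inv \<sigma>) ` nc_support f"
    by blast
qed

lemma S_subalgebra_support_in:
  assumes Nil: "[] \<in> W"
    and append: "\<And>u v. u \<in> W \<Longrightarrow> v \<in> W \<Longrightarrow> u @ v \<in> W"
    and perm: "\<And>u v. mset u = mset v \<Longrightarrow> u \<in> W \<Longrightarrow> v \<in> W"
  shows "S_subalgebra d {f \<in> NC d. nc_support f \<subseteq> W}"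
proof -
  define A where "A = {f \<in> NC d. nc_support f \<subseteq> W}"
  define W' where "W' = {w \<in> W. set w \<subseteq> {..<d}}"
  have A_iff: "f \<in> A \<longleftrightarrow> finite (nc_support f) \<and> nc_support f \<subseteq> W'" for f
    by (auto simp: A_def NC_iff_support W'_def)
  have mem: "g \<in> A" if "nc_support g \<subseteq> S" "finite S" "S \<subseteq> W'" for g S
    using that A_iff finite_subset by blast
  have one: "nc_one \<in> A"
    by (rule mem[of _ "{[]}"]) (auto simp: nc_support_nc_one W'_def Nil)
  have add: "nc_add f g \<in> A" if "f \<in> A" "g \<in> A" for f g
    using that by (intro mem[OF nc_support_nc_add]) (auto simp: A_iff)
  have smult: "nc_smult c f \<in> A" if "f \<in> A" for c f
    using that by (intro mem[OF nc_support_nc_smult]) (auto simp: A_iff)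
  have homog: "homog n f \<in> A" if "f \<in> A" for n f
    using that by (intro mem[OF nc_support_homog]) (auto simp: A_iff)
  have mult: "nc_mult f g \<in> A" if "f \<in> A" "g \<in> A" for f g
    using that by (intro mem[OF nc_support_nc_mult])
      (auto simp: A_iff W'_def subset_iff intro!: append)
  have act: "nc_act f \<sigma> \<in> A" if f: "f \<in> A" and \<sigma>: "\<sigma> permutes {..<n}" and h: "homog n f = f"
    for f \<sigma> n
  proof (rule mem[OF nc_support_nc_act[OF \<sigma> h]])
    show "permute_list (inv \<sigma>) ` nc_support f \<subseteq> W'"
    proof (rule image_subsetI)
      fix w assume w: "w \<in> nc_support f"
      have eq: "mset w = mset (permute_list (inv \<sigma>) w)"
        using permutes_inv[OF \<sigma>] length_nc_support_homog[OF h w] by simp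
      have "w \<in> W'" using f w by (auto simp: A_iff)
      then show "permute_list (inv \<sigma>) w \<in> W'"
        unfolding W'_def using perm[OF eq] mset_eq_setD[OF eq] by simp
    qed
  qed (use f in \<open>simp add: A_iff\<close>)
  have "A \<subseteq> NC d" by (auto simp: A_def)
  then show ?thesis
    unfolding A_def[symmetric] S_subalgebra_def using one add smult mult homog act
    by (auto intro: act)
qed

lemma nc_mult_nc_mono: "nc_mult (nc_mono u) (nc_mono v) = nc_mono (u @ v)"
proof
  fix w
  have split_iff: "take i w = u \<and> drop i w = v \<longleftrightarrow> i = length u \<and> w = u @ v"
    if "i \<le> length w" for i
    using that by (auto simp: min_def)
  have "nc_mult (nc_mono u) (nc_mono v) w
      = (\<Sum>i\<le>length w. if i = length u \<and> w = u @ v then 1 else 0)"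
    unfolding nc_mult_def nc_mono_def
  proof (intro sum.cong refl)
    fix i assume "i \<in> {..length w}"
    then show "(if take i w = u then 1 else 0) * (if drop i w = v then 1 else 0)
        = (if i = length u \<and> w = u @ v then 1 else (0::complex))"
      using split_iff[of i] by auto
  qed
  also have "\<dots> = nc_mono (u @ v) w"
    by (cases "w = u @ v") (simp_all add: nc_mono_def sum.delta)
  finally show "nc_mult (nc_mono u) (nc_mono v) w = nc_mono (u @ v) w" .
qed

lemma nc_mono_Nil: "nc_mono [] = nc_one"
  by (simp add: nc_mono_def nc_one_def fun_eq_iff)

lemma S_subalgebra_nc_mono_mset:
  assumes A: "S_subalgebra d A" and w: "nc_mono w \<in> A" and "mset w' = mset w"
  shows "nc_mono w' \<in> A"
proof -
  obtain p where p: "p permutes {..<length w}" "permute_list p w = w'"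
    using mset_eq_permutation[OF assms(3)] by blast
  have ip: "inv p permutes {..<length w}"
    using permutes_inv[OF p(1)] .
  have "homog (length w) (nc_mono w) = nc_mono w"
    by (auto simp: homog_def nc_mono_def)
  then have "nc_act (nc_mono w) (inv p) \<in> A"
    using A w ip unfolding S_subalgebra_def by blast
  then show ?thesis
    by (simp add: nc_act_nc_mono[OF ip] permutes_inv_inv[OF p(1)] p(2))
qed

lemma S_subalgebra_sum_nc_mono:
  assumes A: "S_subalgebra d A" and "finite S" and "\<And>w. w \<in> S \<Longrightarrow> nc_mono w \<in> A"
  shows "(\<lambda>v. \<Sum>w\<in>S. c w * nc_mono w v) \<in> A"
  using assms(2,3)
proof (induction S rule: finite_induct)
  case empty
  have "nc_smult 0 nc_one \<in> A"
    using A unfolding S_subalgebra_def by blast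
  then show ?case by (simp add: nc_smult_def)
next
  case (insert x S)
  have "(\<lambda>v. \<Sum>w\<in>insert x S. c w * nc_mono w v)
        = nc_add (nc_smult (c x) (nc_mono x)) (\<lambda>v. \<Sum>w\<in>S. c w * nc_mono w v)"
    using insert.hyps by (simp add: nc_add_def nc_smult_def fun_eq_iff)
  then show ?case
    using A insert unfolding S_subalgebra_def by simp
qed

lemma S_subalgebra_mem_if_nc_mono_support:
  assumes A: "S_subalgebra d A" and fin: "finite (nc_support f)"
    and mono: "\<And>w. w \<in> nc_support f \<Longrightarrow> nc_mono w \<in> A"
  shows "f \<in> A"
proof -
  have "(\<Sum>w\<in>nc_support f. f w * nc_mono w v) = f v" for v
  proof -
    have "(\<Sum>w\<in>nc_support f. f w * nc_mono w v) = (\<Sum>w\<in>nc_support f. if w = v then f w else 0)"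
      by (intro sum.cong) (simp_all add: nc_mono_def)
    also have "\<dots> = f v"
      using fin by (simp add: sum.delta' nc_support_def)
    finally show ?thesis .
  qed
  then show ?thesis
    using S_subalgebra_sum_nc_mono[OF A fin mono, of f] by simp
qed

definition minimal_zero_sum :: "nat \<Rightarrow> nat multiset \<Rightarrow> bool" where
  "minimal_zero_sum d N \<longleftrightarrow>
     N \<noteq> {#} \<and> d dvd \<Sum>\<^sub># N \<and> (\<forall>N'. N' \<subset># N \<and> N' \<noteq> {#} \<longrightarrow> \<not> d dvd \<Sum>\<^sub># N')"

lemma zero_sum_submset:
  fixes M :: "nat multiset"
  assumes "0 < d" and "d \<le> size M"
  shows "\<exists>N. N \<subseteq># M \<and> N \<noteq> {#} \<and> size N \<le> d \<and> d dvd \<Sum>\<^sub># N"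
proof -
  obtain xs where xs: "mset xs = M" using ex_mset by blast
  define g where "g i = sum_list (take i xs) mod d" for i
  have "\<not> inj_on g {..d}"
  proof
    assume "inj_on g {..d}"
    moreover have "g ` {..d} \<subseteq> {..<d}" using assms(1) by (auto simp: g_def)
    ultimately have "card {..d} \<le> card {..<d}" by (intro card_inj_on_le) auto
    then show False by simp
  qed
  then obtain a b where ab: "a < b" "b \<le> d" "g a = g b"
    unfolding inj_on_def by (metis atMost_iff linorder_neq_iff)
  define zs where "zs = drop a (take b xs)"
  have take_b: "take b xs = take a xs @ zs"
    unfolding zs_def using ab(1) by (metis append_take_drop_id min.absorb1 less_imp_le take_take)
  have "d dvd sum_list zs"
    using ab(3) take_b unfolding g_def
    by (metis add_diff_cancel_left' le_add1 mod_eq_dvd_iff_nat sum_list_append)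
  moreover have "length zs = b - a"
    using ab assms(2) xs unfolding zs_def by auto
  moreover have "mset zs \<subseteq># M"
  proof -
    have "xs = take a xs @ zs @ drop b xs"
      using take_b by (metis append_assoc append_take_drop_id)
    then show ?thesis
      unfolding xs[symmetric] by (metis mset_append mset_subset_eq_add_left add.left_commute)
  qed
  ultimately show ?thesis using ab
    by (intro exI[of _ "mset zs"]) (auto simp: sum_mset_sum_list)
qed

lemma minimal_zero_sum_size_le:
  assumes "0 < d" and "minimal_zero_sum d N"
  shows "size N \<le> d"
proof (rule ccontr)
  assume "\<not> size N \<le> d"
  then obtain N' where N': "N' \<subseteq># N" "N' \<noteq> {#}" "size N' \<le> d" "d dvd \<Sum>\<^sub># N'"
    using zero_sum_submset[OF assms(1), of N] by auto
  then have "N' \<subset># N" using \<open>\<not> size N \<le> d\<close> by (auto simp: subset_mset.le_less)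
  with N' assms(2) show False unfolding minimal_zero_sum_def by blast
qed

lemma ex_minimal_zero_sum_submset:
  assumes "M \<noteq> {#}" and "d dvd \<Sum>\<^sub># M"
  shows "\<exists>N. N \<subseteq># M \<and> minimal_zero_sum d N"
  using assms
proof (induction M rule: full_multiset_induct)
  case (less M)
  show ?case
  proof (cases "minimal_zero_sum d M")
    case False
    then obtain N' where "N' \<subset># M" "N' \<noteq> {#}" "d dvd \<Sum>\<^sub># N'"
      using less.prems unfolding minimal_zero_sum_def by blast
    with less.IH show ?thesis by (meson subset_mset.order_trans subset_mset.less_imp_le)
  qed blast
qed

lemma count_mset_mono_word:
  "count (mset (mono_word d ns)) j = (if j \<in> {1..<d} then ns j else 0)"
proof -
  have "count (mset (concat (map (\<lambda>j. replicate (ns j) j) js))) x = (if x \<in> set js then ns x else 0)"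
    if "distinct js" for js x
    using that by (induction js) auto
  then show ?thesis unfolding mono_word_def by simp
qed

lemma length_mono_word: "length (mono_word d ns) = (\<Sum>j\<in>{1..<d}. ns j)"
  by (simp add: mono_word_def length_concat sum_list_distinct_conv_sum_set comp_def)

lemma sum_list_mono_word: "sum_list (mono_word d ns) = (\<Sum>j\<in>{1..<d}. j * ns j)"
proof -
  have "sum_list (concat (map (\<lambda>j. replicate (ns j) j) js)) = (\<Sum>j\<leftarrow>js. j * ns j)" for js
    by (induction js) (auto simp: sum_list_replicate)
  then show ?thesis unfolding mono_word_def by (simp add: sum_list_distinct_conv_sum_set)
qed

lemma set_mono_word: "set (mono_word d ns) \<subseteq> {1..<d}"
  by (auto simp: mono_word_def)

lemma mset_mono_word_count:
  assumes "set_mset N \<subseteq> {1..<d}"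
  shows "mset (mono_word d (count N)) = N"
  using assms by (auto simp: multiset_eq_iff count_mset_mono_word not_in_iff)

lemma mset_mono_word_add:
  "mset (mono_word d (\<lambda>j. a j + b j)) = mset (mono_word d a) + mset (mono_word d b)"
  by (simp add: multiset_eq_iff count_mset_mono_word)

lemma admissible_iff_mono_word:
  "admissible d ns \<longleftrightarrow> (\<forall>j. (j = 0 \<or> d \<le> j) \<longrightarrow> ns j = 0) \<and>
     mono_word d ns \<noteq> [] \<and> length (mono_word d ns) \<le> d \<and> d dvd sum_list (mono_word d ns)"
proof -
  have "mono_word d ns \<noteq> [] \<longleftrightarrow> 1 \<le> (\<Sum>j\<in>{1..<d}. ns j)"
    unfolding length_mono_word[symmetric] by (simp add: Suc_le_eq)
  then show ?thesis
    unfolding admissible_def length_mono_word sum_list_mono_word by auto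
qed

lemma indecomposable_if_minimal_zero_sum:
  assumes "0 < d" and N: "set_mset N \<subseteq> {1..<d}" and min: "minimal_zero_sum d N"
  shows "indecomposable d (count N)"
  unfolding indecomposable_def
proof (intro conjI notI)
  define w where "w = mono_word d (count N)"
  have w: "mset w = N" using mset_mono_word_count[OF N] by (simp add: w_def)
  have "\<forall>j. (j = 0 \<or> d \<le> j) \<longrightarrow> count N j = 0"
    using N by (auto simp: count_eq_zero_iff)
  moreover have "w \<noteq> []" using w min by (auto simp: minimal_zero_sum_def)
  moreover have "length w \<le> d"
    using minimal_zero_sum_size_le[OF assms(1) min] w by (metis size_mset)
  moreover have "d dvd sum_list w"
    using w min by (metis sum_mset_sum_list minimal_zero_sum_def)
  ultimately show "admissible d (count N)"
    unfolding admissible_iff_mono_word w_def by blast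
next
  assume "\<exists>a b. admissible d a \<and> admissible d b \<and> count N = (\<lambda>j. a j + b j)"
  then obtain a b where a: "admissible d a" and b: "admissible d b"
    and ab: "count N = (\<lambda>j. a j + b j)" by blast
  define A B where "A = mset (mono_word d a)" and "B = mset (mono_word d b)"
  have "A + B = N"
    using mset_mono_word_add[of d a b] ab mset_mono_word_count[OF N] by (simp add: A_def B_def)
  moreover have "B \<noteq> {#}" using b by (simp add: admissible_iff_mono_word B_def)
  ultimately have "A \<subset># N" by (auto simp: subset_mset.less_le)
  moreover have "A \<noteq> {#}" "d dvd \<Sum>\<^sub># A"
    using a by (simp_all add: admissible_iff_mono_word A_def sum_mset_sum_list)
  ultimately show False using min unfolding minimal_zero_sum_def by blast
qed

lemma ex_generator_submset:
  assumes "0 < d" and "w \<noteq> []" and "set w \<subseteq> {..<d}" and "d dvd sum_list w"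
  shows "\<exists>g. nc_mono g \<in> U_gen d \<and> g \<noteq> [] \<and> mset g \<subseteq># mset w \<and> d dvd sum_list g"
proof (cases "0 \<in> set w")
  case True
  then show ?thesis by (intro exI[of _ "[0]"]) (auto simp: U_gen_def)
next
  case False
  have w: "set_mset (mset w) \<subseteq> {1..<d}"
  proof
    fix x assume "x \<in># mset w"
    then have "x \<in> set w" by simp
    then have "x \<noteq> 0" "x < d" using False assms(3) by (metis, blast)
    then show "x \<in> {1..<d}" by simp
  qed
  obtain N where N: "N \<subseteq># mset w" "minimal_zero_sum d N"
    using ex_minimal_zero_sum_submset[of "mset w" d] assms(2,4) by (auto simp: sum_mset_sum_list)
  have Nd: "set_mset N \<subseteq> {1..<d}"
    using set_mset_mono[OF N(1)] w by blast
  define g where "g = mono_word d (count N)"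
  have g: "mset g = N"
    unfolding g_def by (rule mset_mono_word_count[OF Nd])
  have "nc_mono g \<in> U_gen d"
    using indecomposable_if_minimal_zero_sum[OF assms(1) Nd N(2)] by (auto simp: U_gen_def g_def)
  moreover have "g \<noteq> []" "d dvd sum_list g"
    using N(2) g unfolding minimal_zero_sum_def by (auto simp flip: sum_mset_sum_list)
  ultimately show ?thesis using N(1) g by blast
qed

lemma S_subalgebra_nc_mono_zero_sum:
  assumes A: "S_subalgebra d A" and U: "U_gen d \<subseteq> A" and "0 < d"
  shows "set w \<subseteq> {..<d} \<Longrightarrow> d dvd sum_list w \<Longrightarrow> nc_mono w \<in> A"
proof (induction "length w" arbitrary: w rule: less_induct)
  case less
  show ?case
  proof (cases "w = []")
    case True
    then show ?thesis using A by (simp add: nc_mono_Nil S_subalgebra_def)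
  next
    case False
    then obtain g where g: "nc_mono g \<in> U_gen d" "g \<noteq> []" "mset g \<subseteq># mset w" "d dvd sum_list g"
      using ex_generator_submset[OF assms(3) _ less.prems] by blast
    obtain w' where "mset w' = mset w - mset g" using ex_mset by blast
    then have perm: "mset (g @ w') = mset w"
      using g(3) by (simp add: subset_mset.add_diff_inverse)
    have "length w' < length w"
      using mset_eq_length[OF perm] g(2) by (cases g) auto
    moreover have "set w' \<subseteq> {..<d}"
      using mset_eq_setD[OF perm] less.prems(1) by (metis set_append le_sup_iff)
    moreover have "d dvd sum_list w'"
    proof -
      have "sum_list g + sum_list w' = sum_list w"
        using arg_cong[OF perm, of sum_mset] by (simp add: sum_mset_sum_list)
      then show ?thesis using g(4) less.prems(2) by (metis dvd_add_right_iff)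
    qed
    ultimately have "nc_mono w' \<in> A" by (rule less.hyps)
    then have "nc_mono (g @ w') \<in> A"
      using A U g(1) by (simp add: S_subalgebra_def nc_mult_nc_mono[symmetric] subsetD)
    then show ?thesis using S_subalgebra_nc_mono_mset[OF A _ perm[symmetric]] by blast
  qed
qed

lemma invariants_subset_S_subalgebra:
  assumes "0 < d" and A: "S_subalgebra d A" and U: "U_gen d \<subseteq> A"
  shows "invariants d \<subseteq> A"
proof
  fix f assume "f \<in> invariants d"
  then have fin: "finite (nc_support f)"
    and supp: "\<And>w. w \<in> nc_support f \<Longrightarrow> set w \<subseteq> {..<d} \<and> d dvd sum_list w"
    unfolding invariants_eq_zero_sum_support[OF assms(1)] NC_iff_support by auto
  show "f \<in> A"
  proof (rule S_subalgebra_mem_if_nc_mono_support[OF A fin])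
    fix w assume "w \<in> nc_support f"
    then show "nc_mono w \<in> A"
      using supp S_subalgebra_nc_mono_zero_sum[OF A U assms(1)] by blast
  qed
qed

lemma U_gen_subset_invariants:
  assumes "0 < d"
  shows "U_gen d \<subseteq> invariants d"
proof -
  have mono: "nc_mono g \<in> invariants d" if "set g \<subseteq> {..<d}" and "d dvd sum_list g" for g
    using that by (simp add: invariants_eq_zero_sum_support[OF assms] NC_iff_support nc_support_nc_mono)
  show ?thesis
  proof
    fix f assume "f \<in> U_gen d"
    then consider "f = nc_mono [0]" | ns where "f = nc_mono (mono_word d ns)" "admissible d ns"
      unfolding U_gen_def indecomposable_def by blast
    then show "f \<in> invariants d"
    proof cases
      case 1
      then show ?thesis using assms by (simp add: mono)
    next
      case 2
      show ?thesis
        unfolding 2(1) using 2(2) set_mono_word[of d ns]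
        by (intro mono) (auto simp: admissible_iff_mono_word)
    qed
  qed
qed

lemma S_subalgebra_invariants:
  assumes "0 < d"
  shows "S_subalgebra d (invariants d)"
  unfolding invariants_eq_zero_sum_support[OF assms]
proof (rule S_subalgebra_support_in)
  show "u @ v \<in> {w. d dvd sum_list w}"
    if "u \<in> {w. d dvd sum_list w}" and "v \<in> {w. d dvd sum_list w}" for u v
    using that by simp
  show "v \<in> {w. d dvd sum_list w}" if "mset u = mset v" and "u \<in> {w. d dvd sum_list w}" for u v
    using that by (simp flip: sum_mset_sum_list)
qed simp

theorem theorem4p1:
  fixes d :: nat
  assumes "d \<ge> 2"
  shows "S_generated d (U_gen d) = invariants d"
proof (rule antisym)
  have d: "0 < d" using assms by simp
  show "S_generated d (U_gen d) \<subseteq> invariants d"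
    unfolding S_generated_def using S_subalgebra_invariants[OF d] U_gen_subset_invariants[OF d]
    by (intro Inter_lower) simp
  show "invariants d \<subseteq> S_generated d (U_gen d)"
    unfolding S_generated_def using invariants_subset_S_subalgebra[OF d]
    by (intro Inter_greatest) simp
qed

end
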